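(* For every $\epsilon > 0$ there exists a constant $C(\epsilon) > 0$ such that for every graph $G$ at least one of the following holds: (i) $\chi(G) \leq \left(\frac{1}{2} + \epsilon\right)\omega(G) + \frac{\Delta(G) + 2}{2}$; (ii) $\kappa(\overline{G}) \geq C(\epsilon)\log(|G|)$.
   Context: All graphs are finite and simple with non-empty vertex set. $|G|$ is the number of vertices, $\chi$ the chromatic number, $\omega$ the clique number, $\Delta$ the maximum degree. $\overline{G}$ is the complement of $G$, and $\kappa(\overline{G})$ is its vertex connectivity: the minimum size of a set $K$ of vertices with $\overline{G}-K$ disconnected, or $|G|-1$ if $\overline{G}$ is complete. *)

theory Defs
  imports Main Complex_Main
begin

definition simple_graph :: "'a set \<Rightarrow> ('a \<Rightarrow> 'a \<Rightarrow> bool) \<Rightarrow> bool" where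
  "simple_graph V E \<longleftrightarrow> finite V \<and> V \<noteq> {} \<and>
     (\<forall>x y. E x y \<longrightarrow> x \<in> V \<and> y \<in> V) \<and>
     (\<forall>x y. E x y \<longrightarrow> E y x) \<and> (\<forall>x. \<not> E x x)"

definition proper_colouring :: "'a set \<Rightarrow> ('a \<Rightarrow> 'a \<Rightarrow> bool) \<Rightarrow> nat \<Rightarrow> ('a \<Rightarrow> nat) \<Rightarrow> bool" where
  "proper_colouring V E k f \<longleftrightarrow> (\<forall>x\<in>V. f x < k) \<and> (\<forall>x\<in>V. \<forall>y\<in>V. E x y \<longrightarrow> f x \<noteq> f y)"

definition chromatic_number :: "'a set \<Rightarrow> ('a \<Rightarrow> 'a \<Rightarrow> bool) \<Rightarrow> nat" where
  "chromatic_number V E = (LEAST k. \<exists>f. proper_colouring V E k f)"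

definition is_clique :: "'a set \<Rightarrow> ('a \<Rightarrow> 'a \<Rightarrow> bool) \<Rightarrow> 'a set \<Rightarrow> bool" where
  "is_clique V E S \<longleftrightarrow> S \<subseteq> V \<and> (\<forall>x\<in>S. \<forall>y\<in>S. x \<noteq> y \<longrightarrow> E x y)"

definition clique_number :: "'a set \<Rightarrow> ('a \<Rightarrow> 'a \<Rightarrow> bool) \<Rightarrow> nat" where
  "clique_number V E = Max (card ` {S. is_clique V E S})"

definition degree :: "'a set \<Rightarrow> ('a \<Rightarrow> 'a \<Rightarrow> bool) \<Rightarrow> 'a \<Rightarrow> nat" where
  "degree V E x = card {y\<in>V. E x y}"

definition max_degree :: "'a set \<Rightarrow> ('a \<Rightarrow> 'a \<Rightarrow> bool) \<Rightarrow> nat" where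
  "max_degree V E = Max (degree V E ` V)"

definition complement :: "'a set \<Rightarrow> ('a \<Rightarrow> 'a \<Rightarrow> bool) \<Rightarrow> ('a \<Rightarrow> 'a \<Rightarrow> bool)" where
  "complement V E = (\<lambda>x y. x \<in> V \<and> y \<in> V \<and> x \<noteq> y \<and> \<not> E x y)"

definition is_complete :: "'a set \<Rightarrow> ('a \<Rightarrow> 'a \<Rightarrow> bool) \<Rightarrow> bool" where
  "is_complete V E \<longleftrightarrow> (\<forall>x\<in>V. \<forall>y\<in>V. x \<noteq> y \<longrightarrow> E x y)"

definition disconnected :: "'a set \<Rightarrow> ('a \<Rightarrow> 'a \<Rightarrow> bool) \<Rightarrow> bool" where
  "disconnected W E \<longleftrightarrow> (\<exists>A B. A \<noteq> {} \<and> B \<noteq> {} \<and> A \<union> B = W \<and> A \<inter> B = {} \<and>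
      (\<forall>a\<in>A. \<forall>b\<in>B. \<not> E a b))"

definition vertex_connectivity :: "'a set \<Rightarrow> ('a \<Rightarrow> 'a \<Rightarrow> bool) \<Rightarrow> nat" where
  "vertex_connectivity V E =
     (if is_complete V E then card V - 1
      else (LEAST k. \<exists>K. K \<subseteq> V \<and> card K = k \<and> disconnected (V - K) E))"

end

theory Submission
  imports Defs "HOL-Library.Ramsey"
begin

text \<open>
  If the complement of \<open>G\<close> is complete the second alternative is trivial. Otherwise a minimum
  separator \<open>K\<close> of the complement splits \<open>V - K\<close> into nonempty parts \<open>A\<close> and \<open>B\<close> such that
  every vertex of \<open>A\<close> is adjacent in \<open>G\<close> to every vertex of \<open>B\<close>. Hence cliques of \<open>A\<close> and \<open>B\<close>
  combine, a vertex of \<open>A\<close> sees all of \<open>B\<close> and vice versa, and the bound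
  \<open>4 chi(H) \<le> 2 omega(H) + Delta(H) + |H| + 2\<close>, valid for every graph \<open>H\<close>, applied to \<open>A\<close> and \<open>B\<close>
  gives \<open>chi(G) \<le> |K| + omega/2 + Delta/2 + 1\<close>. So if the first alternative fails,
  \<open>epsilon omega < |K|\<close>. Ramsey's theorem gives \<open>5 chi(H) \<le> |H| + 5 2^(omega(H)+6)\<close>; since
  \<open>|A|, |B| \<le> Delta\<close>, the failure of the first alternative also forces
  \<open>|G| < 21 |K| + 1280 2^omega < exp((1/epsilon + 2048) |K|)\<close>.

  The bound for \<open>H\<close> is proved by deleting maximum independent sets while \<open>alpha(H) \<ge> 3\<close> (each
  deletion lowers \<open>Delta\<close>, and \<open>|H|\<close> by at least 3, at the cost of one colour). When
  \<open>alpha(H) \<le> 2\<close>, the edges of a maximum matching \<open>M\<close> of the complement and the unmatched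
  vertices \<open>U\<close> form a colouring, and the absence of augmenting paths of length 1, 3 and 5
  exhibits two cliques whose sizes add up to \<open>2|U| + |D| - 1\<close>, where \<open>D\<close> is the set of
  non-neighbours of an unmatched vertex.
\<close>

definition is_independent :: "'a set \<Rightarrow> ('a \<Rightarrow> 'a \<Rightarrow> bool) \<Rightarrow> 'a set \<Rightarrow> bool" where
  "is_independent V E S \<longleftrightarrow> S \<subseteq> V \<and> (\<forall>x\<in>S. \<forall>y\<in>S. \<not> E x y)"

definition independence_number :: "'a set \<Rightarrow> ('a \<Rightarrow> 'a \<Rightarrow> bool) \<Rightarrow> nat" where
  "independence_number V E = Max (card ` {S. is_independent V E S})"

lemma finite_cliques: "finite V \<Longrightarrow> finite {S. is_clique V E S}"
  by (rule finite_subset[of _ "Pow V"]) (auto simp: is_clique_def)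

lemma card_le_clique_number:
  assumes "finite V" "is_clique V E S"
  shows "card S \<le> clique_number V E"
  unfolding clique_number_def using assms by (auto intro: Max_ge finite_cliques)

lemma clique_number_attained:
  assumes "finite V"
  obtains S where "is_clique V E S" "card S = clique_number V E"
proof -
  have "is_clique V E {}" by (simp add: is_clique_def)
  then have "clique_number V E \<in> card ` {S. is_clique V E S}"
    unfolding clique_number_def using assms by (intro Max_in finite_imageI finite_cliques) auto
  then show ?thesis using that by auto
qed

lemma clique_number_mono:
  assumes "finite V" "W \<subseteq> V"
  shows "clique_number W E \<le> clique_number V E"
proof -
  obtain S where "is_clique W E S" "card S = clique_number W E"
    using clique_number_attained assms finite_subset by metis
  moreover from this(1) have "is_clique V E S"
    using assms(2) by (auto simp: is_clique_def)
  ultimately show ?thesis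
    using card_le_clique_number[OF assms(1)] by metis
qed

lemma is_clique_subset: "is_clique V E A \<Longrightarrow> B \<subseteq> A \<Longrightarrow> is_clique V E B"
  by (auto simp: is_clique_def)

lemma finite_independent_sets: "finite V \<Longrightarrow> finite {S. is_independent V E S}"
  by (rule finite_subset[of _ "Pow V"]) (auto simp: is_independent_def)

lemma card_le_independence_number:
  assumes "finite V" "is_independent V E S"
  shows "card S \<le> independence_number V E"
  unfolding independence_number_def using assms by (auto intro: Max_ge finite_independent_sets)

lemma independence_number_attained:
  assumes "finite V"
  obtains S where "is_independent V E S" "card S = independence_number V E"
proof -
  have "is_independent V E {}" by (simp add: is_independent_def)
  then have "independence_number V E \<in> card ` {S. is_independent V E S}"
    unfolding independence_number_def using assms
    by (intro Max_in finite_imageI finite_independent_sets) auto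
  then show ?thesis using that by auto
qed

lemma complement_vertices: "complement V E x y \<Longrightarrow> x \<in> V \<and> y \<in> V"
  by (simp add: complement_def)

lemma complement_irrefl: "\<not> complement V E x x"
  by (simp add: complement_def)

lemma degree_le_max_degree: "finite V \<Longrightarrow> x \<in> V \<Longrightarrow> degree V E x \<le> max_degree V E"
  unfolding max_degree_def by simp

lemma max_degree_attained:
  assumes "finite V" "V \<noteq> {}"
  obtains x where "x \<in> V" "degree V E x = max_degree V E"
proof -
  have "max_degree V E \<in> degree V E ` V" unfolding max_degree_def using assms by (intro Max_in) auto
  then show ?thesis using that by auto
qed

lemma degree_mono: "finite V \<Longrightarrow> W \<subseteq> V \<Longrightarrow> degree W E x \<le> degree V E x"
  unfolding degree_def by (rule card_mono) auto

lemma max_degree_mono: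
  assumes "finite V" "W \<subseteq> V" "W \<noteq> {}"
  shows "max_degree W E \<le> max_degree V E"
proof -
  obtain x where "x \<in> W" "degree W E x = max_degree W E"
    using max_degree_attained assms finite_subset by metis
  then show ?thesis
    using degree_mono[OF assms(1,2)] degree_le_max_degree[OF assms(1)] assms(2) by (metis le_trans subsetD)
qed

lemma card_le_Suc_non_neighbours_max_degree:
  assumes "finite V" "v \<in> V"
  shows "card V \<le> Suc (card {y. complement V E v y} + max_degree V E)"
proof -
  let ?S = "{y. complement V E v y} \<union> {y \<in> V. E v y}"
  have "finite ?S"
    using assms(1) by (rule rev_finite_subset) (auto simp: complement_def)
  have "V \<subseteq> insert v ?S"
    using assms(2) by (auto simp: complement_def)
  then have "card V \<le> card (insert v ?S)"
    using \<open>finite ?S\<close> by (intro card_mono) auto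
  also have "\<dots> \<le> Suc (card ?S)"
    using \<open>finite ?S\<close> by (simp add: card_insert_if)
  also have "\<dots> \<le> Suc (card {y. complement V E v y} + degree V E v)"
    unfolding degree_def by (simp add: card_Un_le)
  also have "\<dots> \<le> Suc (card {y. complement V E v y} + max_degree V E)"
    using degree_le_max_degree[OF assms] by simp
  finally show ?thesis .
qed

lemma max_degree_Diff_less:
  assumes "finite V" "I \<subseteq> V" "V - I \<noteq> {}" and dominating: "\<And>y. y \<in> V - I \<Longrightarrow> \<exists>z\<in>I. E y z"
  shows "max_degree (V - I) E < max_degree V E"
proof -
  obtain y where y: "y \<in> V - I" "degree (V - I) E y = max_degree (V - I) E"
    using max_degree_attained assms(1,3) by (metis finite_Diff)
  obtain z where "z \<in> I" "E y z"
    using dominating y(1) by blast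
  then have "z \<in> {u \<in> V. E y u}" "z \<notin> {u \<in> V - I. E y u}"
    using assms(2) by auto
  then have "{u \<in> V - I. E y u} \<subset> {u \<in> V. E y u}"
    by (intro psubsetI) auto
  moreover have "finite {u \<in> V. E y u}"
    using assms(1) by simp
  ultimately have "degree (V - I) E y < degree V E y"
    unfolding degree_def by (metis psubset_card_mono)
  also have "\<dots> \<le> max_degree V E"
    using y(1) by (intro degree_le_max_degree[OF assms(1)]) simp
  finally show ?thesis
    using y(2) by simp
qed

lemma max_degree_join:
  assumes "finite A" "finite B" "A \<inter> B = {}" "A \<noteq> {}" "\<And>a b. a \<in> A \<Longrightarrow> b \<in> B \<Longrightarrow> E a b"
  shows "max_degree A E + card B \<le> max_degree (A \<union> B) E"
proof -
  obtain z where z: "z \<in> A" "degree A E z = max_degree A E"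
    using max_degree_attained assms(1,4) by blast
  have "{u \<in> A. E z u} \<union> B \<subseteq> {u \<in> A \<union> B. E z u}"
    using assms(5) z(1) by blast
  then have "card ({u \<in> A. E z u} \<union> B) \<le> degree (A \<union> B) E z"
    unfolding degree_def using assms(1,2) by (intro card_mono) auto
  moreover have "card ({u \<in> A. E z u} \<union> B) = degree A E z + card B"
    unfolding degree_def using assms(1-3) by (intro card_Un_disjoint) auto
  moreover have "degree (A \<union> B) E z \<le> max_degree (A \<union> B) E"
    using assms(1,2) z(1) by (intro degree_le_max_degree) auto
  ultimately show ?thesis
    using z(2) by linarith
qed

lemma chromatic_number_le: "proper_colouring V E k f \<Longrightarrow> chromatic_number V E \<le> k"
  unfolding chromatic_number_def by (auto intro: Least_le)

lemma chromatic_number_independent_le_1: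
  assumes "is_independent V E I"
  shows "chromatic_number I E \<le> 1"
proof (rule chromatic_number_le)
  show "proper_colouring I E 1 (\<lambda>_. 0)"
    using assms by (auto simp: proper_colouring_def is_independent_def)
qed

lemma chromatic_number_empty: "chromatic_number {} E = 0"
  using chromatic_number_le[of "{}" E 0] by (simp add: proper_colouring_def)

lemma complement_separator:
  assumes "finite V" "\<not> is_complete V (complement V E)"
  obtains K A B where "K \<subseteq> V" "card K = vertex_connectivity V (complement V E)"
    "V - K = A \<union> B" "A \<inter> B = {}" "A \<noteq> {}" "B \<noteq> {}" "\<And>a b. a \<in> A \<Longrightarrow> b \<in> B \<Longrightarrow> E a b"
proof -
  let ?P = "\<lambda>k. \<exists>K. K \<subseteq> V \<and> card K = k \<and> disconnected (V - K) (complement V E)"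
  obtain x y where xy: "x \<in> V" "y \<in> V" "x \<noteq> y" "\<not> complement V E x y"
    using assms(2) unfolding is_complete_def by blast
  have "V - (V - {x, y}) = {x, y}"
    using xy by auto
  then have "disconnected (V - (V - {x, y})) (complement V E)"
    unfolding disconnected_def using xy by (intro exI[of _ "{x}"] exI[of _ "{y}"]) auto
  then have "?P (card (V - {x, y}))"
    by blast
  then have "?P (LEAST k. ?P k)"
    by (rule LeastI)
  then have "?P (vertex_connectivity V (complement V E))"
    unfolding vertex_connectivity_def using assms(2) by simp
  then obtain K A B where K: "K \<subseteq> V" "card K = vertex_connectivity V (complement V E)"
    and AB: "A \<noteq> {}" "B \<noteq> {}" "V - K = A \<union> B" "A \<inter> B = {}"
    and no_edge: "\<forall>a\<in>A. \<forall>b\<in>B. \<not> complement V E a b"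
    unfolding disconnected_def by metis
  have "E a b" if "a \<in> A" "b \<in> B" for a b
  proof -
    have "a \<in> V" "b \<in> V" "a \<noteq> b"
      using AB(3,4) that by auto
    then show ?thesis
      using no_edge that by (auto simp: complement_def)
  qed
  with K AB show ?thesis
    using that by blast
qed

locale simple_adjacency =
  fixes E :: "'a \<Rightarrow> 'a \<Rightarrow> bool"
  assumes sym: "E x y \<Longrightarrow> E y x" and irrefl: "\<not> E x x"
begin

lemma complement_sym: "complement V E x y \<Longrightarrow> complement V E y x"
  using sym by (auto simp: complement_def)

lemma is_clique_Un:
  assumes "is_clique V E A" "is_clique V E B" "\<And>a b. a \<in> A \<Longrightarrow> b \<in> B \<Longrightarrow> a \<noteq> b \<Longrightarrow> E a b"
  shows "is_clique V E (A \<union> B)"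
  unfolding is_clique_def
proof (intro conjI ballI impI)
  show "A \<union> B \<subseteq> V"
    using assms(1,2) by (simp add: is_clique_def)
next
  fix x y assume "x \<in> A \<union> B" "y \<in> A \<union> B" "x \<noteq> y"
  then consider "x \<in> A" "y \<in> A" | "x \<in> B" "y \<in> B" | "x \<in> A" "y \<in> B" | "x \<in> B" "y \<in> A"
    by blast
  then show "E x y"
    using assms(1,2) assms(3)[of x y] assms(3)[of y x] \<open>x \<noteq> y\<close> sym
    by cases (auto simp: is_clique_def)
qed

lemma clique_number_join:
  assumes "finite A" "finite B" "A \<inter> B = {}" "\<And>a b. a \<in> A \<Longrightarrow> b \<in> B \<Longrightarrow> E a b"
  shows "clique_number A E + clique_number B E \<le> clique_number (A \<union> B) E"
proof -
  obtain SA where SA: "is_clique A E SA" "card SA = clique_number A E"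
    using clique_number_attained assms(1) by blast
  obtain SB where SB: "is_clique B E SB" "card SB = clique_number B E"
    using clique_number_attained assms(2) by blast
  have "is_clique (A \<union> B) E SA" "is_clique (A \<union> B) E SB"
    using SA(1) SB(1) by (auto simp: is_clique_def)
  then have "is_clique (A \<union> B) E (SA \<union> SB)"
    using SA(1) SB(1) assms(4) by (intro is_clique_Un) (auto simp: is_clique_def)
  then have "card (SA \<union> SB) \<le> clique_number (A \<union> B) E"
    using assms(1,2) by (intro card_le_clique_number) auto
  moreover have "card (SA \<union> SB) = card SA + card SB"
    using SA(1) SB(1) assms(1-3) by (intro card_Un_disjoint) (auto simp: is_clique_def intro: finite_subset)
  ultimately show ?thesis
    using SA(2) SB(2) by simp
qed

lemma max_degree_join_sym:
  assumes "finite A" "finite B" "A \<inter> B = {}" "B \<noteq> {}"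
    and join: "\<And>a b. a \<in> A \<Longrightarrow> b \<in> B \<Longrightarrow> E a b"
  shows "max_degree B E + card A \<le> max_degree (A \<union> B) E"
proof -
  have "max_degree B E + card A \<le> max_degree (B \<union> A) E"
  proof (rule max_degree_join[OF assms(2,1)])
    show "B \<inter> A = {}" "B \<noteq> {}"
      using assms(3,4) by auto
    show "E b a" if "b \<in> B" "a \<in> A" for b a
      using join[OF that(2,1)] sym by blast
  qed
  then show ?thesis
    by (simp add: Un_commute)
qed

lemma card_join_le_max_degree:
  assumes "finite A" "finite B" "A \<inter> B = {}" "A \<noteq> {}" "B \<noteq> {}"
    and join: "\<And>a b. a \<in> A \<Longrightarrow> b \<in> B \<Longrightarrow> E a b"
  shows "card (A \<union> B) \<le> 2 * max_degree (A \<union> B) E"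
  using max_degree_join[of A B E, OF assms(1-4) join] max_degree_join_sym[OF assms(1-3,5) join]
    card_Un_le[of A B]
  by linarith

lemma maximum_independent_set_dominating:
  assumes "finite V" "is_independent V E I" "card I = independence_number V E" "y \<in> V - I"
  shows "\<exists>z\<in>I. E y z"
proof (rule ccontr)
  assume "\<not> (\<exists>z\<in>I. E y z)"
  then have "is_independent V E (insert y I)"
    using assms(2,4) sym irrefl by (auto simp: is_independent_def)
  then have "card (insert y I) \<le> card I"
    using card_le_independence_number[OF assms(1)] assms(3) by metis
  moreover have "finite I"
    using assms(1,2) by (auto simp: is_independent_def intro: finite_subset)
  ultimately show False
    using assms(4) by simp
qed

lemma proper_colouring_card:
  assumes "finite V"
  obtains f where "proper_colouring V E (card V) f"
proof -
  obtain f where "bij_betw f V {..<card V}"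
    using assms by (metis lessThan_atLeast0 ex_bij_betw_finite_nat)
  then have "proper_colouring V E (card V) f"
    using irrefl unfolding proper_colouring_def bij_betw_def inj_on_def by blast
  then show ?thesis
    by (rule that)
qed

lemma chromatic_number_le_card: "finite V \<Longrightarrow> chromatic_number V E \<le> card V"
  using proper_colouring_card chromatic_number_le by metis

lemma chromatic_number_colouring:
  assumes "finite V"
  obtains f where "proper_colouring V E (chromatic_number V E) f"
  using proper_colouring_card[OF assms] LeastI_ex[of "\<lambda>k. \<exists>f. proper_colouring V E k f"] that
  unfolding chromatic_number_def by blast

lemma chromatic_number_Un_le:
  assumes "finite X" "finite Y"
  shows "chromatic_number (X \<union> Y) E \<le> chromatic_number X E + chromatic_number Y E"
proof -
  obtain f where f: "proper_colouring X E (chromatic_number X E) f"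
    using chromatic_number_colouring assms(1) by blast
  obtain g where g: "proper_colouring Y E (chromatic_number Y E) g"
    using chromatic_number_colouring assms(2) by blast
  let ?h = "\<lambda>z. if z \<in> X then f z else chromatic_number X E + g z"
  have "proper_colouring (X \<union> Y) E (chromatic_number X E + chromatic_number Y E) ?h"
    using f g unfolding proper_colouring_def by (auto simp: trans_less_add1)
  then show ?thesis
    by (rule chromatic_number_le)
qed

lemma chromatic_number_Union_independent_le:
  assumes "finite F" "\<And>A. A \<in> F \<Longrightarrow> finite A \<and> is_independent (\<Union>F) E A"
  shows "chromatic_number (\<Union>F) E \<le> card F"
  using assms
proof (induction F rule: finite_induct)
  case empty
  then show ?case by (simp add: chromatic_number_empty)
next
  case (insert A F)
  have "chromatic_number (A \<union> \<Union>F) E \<le> chromatic_number A E + chromatic_number (\<Union>F) E"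
    using insert.prems insert.hyps(1) by (intro chromatic_number_Un_le) auto
  moreover have "chromatic_number A E \<le> 1"
    using insert.prems chromatic_number_independent_le_1 by blast
  moreover have "chromatic_number (\<Union>F) E \<le> card F"
    using insert.prems by (intro insert.IH) (auto simp: is_independent_def)
  ultimately show ?case
    using insert.hyps by simp
qed

lemma ramsey_clique_independent:
  assumes "finite V" "(s + t) choose s \<le> card V"
  obtains S where "is_clique V E S" "card S = s" | S where "is_independent V E S" "card S = t"
proof -
  let ?N = "(s + t) choose s"
  obtain v where v: "inj_on v {..<?N}" "v ` {..<?N} \<subseteq> V"
    using assms card_le_inj[of "{..<?N}" V] by auto
  define f :: "nat set \<Rightarrow> nat" where "f e = (if \<exists>a\<in>e. \<exists>b\<in>e. E (v a) (v b) then 0 else 1)" for e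
  have "partn_lst {..<?N} [s, t] 2"
    using ramsey2_full[of 2 s t] by (simp add: ES2_choose)
  moreover have "f \<in> [{..<?N}]\<^bsup>2\<^esup> \<rightarrow> {..<length [s, t]}"
    by (simp add: f_def)
  ultimately obtain i where i: "i < 2" and "monochromatic {..<?N} ([s, t] ! i) 2 f i"
    unfolding partn_lst_def by (auto simp: numeral_2_eq_2)
  then obtain H where H: "H \<in> nsets {..<?N} ([s, t] ! i)" and mono: "f ` [H]\<^bsup>2\<^esup> \<subseteq> {i}"
    unfolding monochromatic_def by blast
  have S: "v ` H \<subseteq> V" "card (v ` H) = [s, t] ! i"
    using H v by (auto simp: nsets_def card_image inj_on_subset)
  have edge_iff: "f {a, b} = 0 \<longleftrightarrow> E (v a) (v b)" if "a \<noteq> b" for a b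
    using that sym irrefl by (auto simp: f_def)
  have f_H: "f {a, b} = i" if "a \<in> H" "b \<in> H" "a \<noteq> b" for a b
    using mono doubleton_in_nsets_2[of a b H] that by blast
  consider "i = 0" | "i = 1"
    using i by linarith
  then show ?thesis
  proof cases
    case 1
    then have "E (v a) (v b)" if "a \<in> H" "b \<in> H" "v a \<noteq> v b" for a b
      using edge_iff[of a b] f_H[of a b] that by auto
    then have "is_clique V E (v ` H)"
      using S(1) by (auto simp: is_clique_def)
    with that(1) S 1 show ?thesis by simp
  next
    case 2
    then have "\<not> E (v a) (v b)" if "a \<in> H" "b \<in> H" for a b
      using edge_iff[of a b] f_H[of a b] that irrefl by (cases "a = b") auto
    then have "is_independent V E (v ` H)"
      using S(1) by (auto simp: is_independent_def)
    with that(2) S 2 show ?thesis by simp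
  qed
qed

lemma chromatic_number_le_ramsey:
  assumes "finite V" "clique_number V E \<le> w"
  shows "5 * chromatic_number V E \<le> card V + 5 * 2 ^ (w + 6)"
  using assms
proof (induction "card V" arbitrary: V rule: less_induct)
  case less
  show ?case
  proof (cases "card V < 2 ^ (w + 6)")
    case True
    then show ?thesis
      using chromatic_number_le_card[OF less.prems(1)] by linarith
  next
    case False
    then have "(Suc w + 5) choose Suc w \<le> card V"
      using binomial_le_pow2[of "Suc w + 5" "Suc w"] by (simp add: add.commute)
    then obtain I where I: "is_independent V E I" "card I = 5"
    proof (rule ramsey_clique_independent[OF less.prems(1)])
      fix S assume "is_clique V E S" "card S = Suc w"
      then show thesis
        using card_le_clique_number[OF less.prems(1)] less.prems(2) by fastforce
    qed
    have IV: "I \<subseteq> V" and fin_I: "finite I"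
      using I less.prems(1) by (auto simp: is_independent_def intro: finite_subset)
    have card_diff: "card (V - I) + 5 = card V"
      using I(2) IV fin_I less.prems(1) by (metis card_Diff_subset card_mono le_add_diff_inverse2)
    have "clique_number (V - I) E \<le> w"
      using clique_number_mono[OF less.prems(1), of "V - I" E] less.prems(2) by auto
    then have IH: "5 * chromatic_number (V - I) E \<le> card (V - I) + 5 * 2 ^ (w + 6)"
      using less.hyps[of "V - I"] card_diff less.prems(1) by simp
    have "chromatic_number V E \<le> chromatic_number (V - I) E + chromatic_number I E"
      using chromatic_number_Un_le[of "V - I" I] less.prems(1) fin_I IV by (simp add: Un_absorb2)
    also have "\<dots> \<le> chromatic_number (V - I) E + 1"
      using chromatic_number_independent_le_1[OF I(1)] by simp
    finally show ?thesis
      using IH card_diff by linarith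
  qed
qed

end

definition matching :: "('a \<Rightarrow> 'a \<Rightarrow> bool) \<Rightarrow> 'a set set \<Rightarrow> bool" where
  "matching R M \<longleftrightarrow> (\<forall>e\<in>M. \<exists>x y. e = {x, y} \<and> R x y) \<and> pairwise disjnt M"

definition maximum_matching :: "('a \<Rightarrow> 'a \<Rightarrow> bool) \<Rightarrow> 'a set set \<Rightarrow> bool" where
  "maximum_matching R M \<longleftrightarrow> matching R M \<and> (\<forall>M'. matching R M' \<longrightarrow> card M' \<le> card M)"

lemma matching_subset_Pow:
  assumes "matching R M" "\<And>x y. R x y \<Longrightarrow> x \<in> V \<and> y \<in> V"
  shows "M \<subseteq> Pow V"
proof
  fix e assume "e \<in> M"
  then obtain x y where "e = {x, y}" "R x y"
    using assms(1) by (auto simp: matching_def)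
  then show "e \<in> Pow V"
    using assms(2) by auto
qed

lemma maximum_matching_exists:
  assumes "finite V" "\<And>x y. R x y \<Longrightarrow> x \<in> V \<and> y \<in> V"
  obtains M where "maximum_matching R M"
proof -
  let ?Ms = "{M. matching R M}"
  have "?Ms \<subseteq> Pow (Pow V)"
    using matching_subset_Pow[OF _ assms(2)] by blast
  then have "finite ?Ms"
    using assms(1) by (simp add: finite_subset)
  moreover have "{} \<in> ?Ms"
    by (simp add: matching_def)
  ultimately obtain M where M: "M \<in> ?Ms" "Max (card ` ?Ms) = card M"
    using obtains_MAX[of ?Ms card] by blast
  with \<open>finite ?Ms\<close> have "card M' \<le> card M" if "M' \<in> ?Ms" for M'
    using that by (metis Max_ge finite_imageI imageI)
  with M(1) show ?thesis
    using that by (auto simp: maximum_matching_def)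
qed

lemma maximum_matching_exchange:
  assumes max: "maximum_matching R M" and "finite M" "M' \<subseteq> M" "matching R N"
    and N_vertices: "\<Union>N \<subseteq> \<Union>M' \<union> - \<Union>M"
  shows "card N \<le> card M'"
proof (cases "finite N")
  case True
  have M: "matching R M"
    using max by (simp add: maximum_matching_def)
  then have M_disj: "pairwise disjnt M"
    by (simp add: matching_def)
  have disj: "disjnt e f" if e: "e \<in> M - M'" and f: "f \<in> N" for e f
  proof (rule ccontr)
    assume "\<not> disjnt e f"
    then obtain z where "z \<in> e" "z \<in> f"
      by (auto simp: disjnt_def)
    then obtain e' where "e' \<in> M'" "z \<in> e'"
      using N_vertices e f by blast
    moreover have "e \<noteq> e'" "e \<in> M" "e' \<in> M"
      using e \<open>e' \<in> M'\<close> \<open>M' \<subseteq> M\<close> by auto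
    ultimately have "disjnt e e'"
      using pairwiseD[OF M_disj] by blast
    then show False
      using \<open>z \<in> e\<close> \<open>z \<in> e'\<close> by (auto simp: disjnt_def)
  qed
  have "e \<noteq> {}" if "e \<in> N" for e
    using \<open>matching R N\<close> that by (auto simp: matching_def)
  then have "e \<notin> N" if "e \<in> M - M'" for e
    using disj[OF that] by (metis disjnt_self_iff_empty)
  then have "(M - M') \<inter> N = {}"
    by blast
  moreover have "matching R ((M - M') \<union> N)"
    using M \<open>matching R N\<close> disj unfolding matching_def pairwise_def
    by (metis DiffD1 Un_iff disjnt_sym)
  ultimately have "card (M - M') + card N \<le> card M"
    using max \<open>finite M\<close> True by (metis card_Un_disjoint finite_Diff maximum_matching_def)
  moreover have "card (M - M') = card M - card M'"
    using \<open>finite M\<close> \<open>M' \<subseteq> M\<close> by (simp add: card_Diff_subset finite_subset)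
  moreover have "card M' \<le> card M"
    using \<open>finite M\<close> \<open>M' \<subseteq> M\<close> by (rule card_mono)
  ultimately show ?thesis
    by linarith
qed simp

definition partner :: "'a set set \<Rightarrow> 'a \<Rightarrow> 'a" where
  "partner M x = (THE y. {x, y} \<in> M)"

context
  fixes R :: "'a \<Rightarrow> 'a \<Rightarrow> bool" and M :: "'a set set"
  assumes matching: "matching R M" and irrefl: "\<And>x. \<not> R x x"
begin

lemma matching_edge_neq:
  assumes "{x, y} \<in> M"
  shows "x \<noteq> y"
proof
  assume "x = y"
  obtain a b where "{x, y} = {a, b}" "R a b"
    using assms matching by (auto simp: matching_def)
  with \<open>x = y\<close> show False
    using irrefl by (auto simp: doubleton_eq_iff)
qed

lemma matching_edges_eq: "e \<in> M \<Longrightarrow> e' \<in> M \<Longrightarrow> z \<in> e \<Longrightarrow> z \<in> e' \<Longrightarrow> e = e'"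
  using matching unfolding matching_def pairwise_def disjnt_def by blast

lemma partner_eq:
  assumes "{x, y} \<in> M"
  shows "partner M x = y"
  unfolding partner_def
proof (rule the_equality)
  fix y' assume "{x, y'} \<in> M"
  then have "{x, y'} = {x, y}"
    using assms matching_edges_eq by blast
  then show "y' = y"
    using matching_edge_neq[OF assms] by (metis doubleton_eq_iff)
qed (fact assms)

lemma partner_in_matching:
  assumes "x \<in> \<Union>M"
  shows "{x, partner M x} \<in> M"
proof -
  obtain e where "e \<in> M" "x \<in> e"
    using assms by blast
  moreover obtain a b where "e = {a, b}"
    using \<open>e \<in> M\<close> matching by (auto simp: matching_def)
  ultimately have "{a, b} \<in> M" "x \<in> {a, b}"
    by auto
  then obtain y where "{x, y} \<in> M"
    by (metis insert_commute insertE singletonD)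
  then show ?thesis
    using partner_eq by simp
qed

lemma inj_on_partner: "inj_on (partner M) (\<Union>M)"
proof (rule inj_onI)
  fix x y assume "x \<in> \<Union>M" "y \<in> \<Union>M" and eq: "partner M x = partner M y"
  then have "{x, partner M x} \<in> M" "{y, partner M x} \<in> M"
    using partner_in_matching eq by metis+
  then have "{x, partner M x} = {y, partner M x}"
    using matching_edges_eq by blast
  then show "x = y"
    using matching_edge_neq \<open>{x, partner M x} \<in> M\<close> by (metis doubleton_eq_iff)
qed

end

locale alpha_two_graph = simple_adjacency +
  fixes V :: "'a set" and M :: "'a set set"
  assumes finite_V: "finite V"
    and independence_number_le_2: "independence_number V E \<le> 2"
    and maximum_matching: "maximum_matching (complement V E) M"
begin

abbreviation unmatched :: "'a set" where
  "unmatched \<equiv> V - \<Union>M"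

lemma matching: "matching (complement V E) M"
  using maximum_matching by (simp add: maximum_matching_def)

lemma matching_subset_Pow_V: "M \<subseteq> Pow V"
  using matching complement_vertices by (rule matching_subset_Pow)

lemma finite_matching: "finite M"
  using matching_subset_Pow_V finite_V by (meson finite_Pow_iff finite_subset)

lemma matched_subset: "\<Union>M \<subseteq> V"
  using matching_subset_Pow_V by blast

lemma card_matched: "card (\<Union>M) = 2 * card M"
proof -
  have "card e = 2" if "e \<in> M" for e
    using that matching matching_edge_neq[OF matching complement_irrefl]
    by (fastforce simp: matching_def)
  moreover have "pairwise disjnt M"
    using matching by (simp add: matching_def)
  moreover have "finite e" if "e \<in> M" for e
    using that matching_subset_Pow_V finite_V finite_subset by blast
  ultimately show ?thesis
    using card_Union_disjoint[of M] by (simp add: mult.commute)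
qed

lemma complement_if_matching_edge:
  assumes "{x, y} \<in> M"
  shows "complement V E x y"
proof -
  obtain a b where "{x, y} = {a, b}" "complement V E a b"
    using assms matching by (auto simp: matching_def)
  then show ?thesis
    using complement_sym by (metis doubleton_eq_iff)
qed

lemma no_augmenting_exchange:
  assumes "M' \<subseteq> M" "matching (complement V E) N" "\<Union>N \<subseteq> \<Union>M' \<union> unmatched"
  shows "card N \<le> card M'"
  using maximum_matching_exchange[OF maximum_matching finite_matching assms(1,2)] assms(3) by blast

lemma adjacent_if_common_non_neighbour:
  assumes "complement V E w x" "complement V E w y" "x \<noteq> y"
  shows "E x y"
proof (rule ccontr)
  assume "\<not> E x y"
  then have "is_independent V E {w, x, y}"
    using assms sym irrefl by (auto simp: is_independent_def complement_def)
  then have "card {w, x, y} \<le> 2"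
    using card_le_independence_number[OF finite_V] independence_number_le_2 le_trans by blast
  moreover have "w \<noteq> x" "w \<noteq> y"
    using assms(1,2) complement_irrefl by metis+
  then have "card {w, x, y} = 3"
    using assms(3) by simp
  ultimately show False by simp
qed

lemma is_clique_non_neighbours: "is_clique V E {y. complement V E v y}"
proof -
  have "{y. complement V E v y} \<subseteq> V"
    by (auto simp: complement_def)
  moreover have "E x y" if "complement V E v x" "complement V E v y" "x \<noteq> y" for x y
    using adjacent_if_common_non_neighbour that .
  ultimately show ?thesis
    unfolding is_clique_def by blast
qed

lemma is_clique_unmatched: "is_clique V E unmatched"
proof -
  have "E u v" if "u \<in> unmatched" "v \<in> unmatched" "u \<noteq> v" for u v
  proof (rule ccontr)
    assume "\<not> E u v"
    then have "matching (complement V E) {{u, v}}"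
      using that by (auto simp: matching_def complement_def)
    then have "card {{u, v}} \<le> card {}"
      using no_augmenting_exchange[of "{}"] that by auto
    then show False by simp
  qed
  then show ?thesis
    by (auto simp: is_clique_def)
qed

lemma matched_if_non_neighbour_unmatched:
  assumes "w \<in> unmatched" "complement V E w y"
  shows "y \<in> \<Union>M"
proof (rule ccontr)
  assume "y \<notin> \<Union>M"
  then have "y \<in> unmatched" "w \<noteq> y"
    using assms(2) by (auto simp: complement_def)
  then have "E w y"
    using is_clique_unmatched assms(1) by (auto simp: is_clique_def)
  then show False
    using assms(2) by (simp add: complement_def)
qed

lemma no_augmenting_path_3:
  assumes "u \<in> unmatched" "w \<in> unmatched" "u \<noteq> w" "{x, y} \<in> M" "complement V E u x"
  shows "\<not> complement V E y w"
proof
  assume yw: "complement V E y w"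
  have "x \<noteq> y"
    using matching_edge_neq[OF matching complement_irrefl assms(4)] .
  have "u \<noteq> x" "u \<noteq> y" "w \<noteq> x" "w \<noteq> y"
    using assms(1,2,4) by auto
  let ?N = "{{u, x}, {y, w}}"
  have "pairwise disjnt ?N"
    using \<open>x \<noteq> y\<close> \<open>u \<noteq> w\<close> \<open>u \<noteq> y\<close> \<open>w \<noteq> x\<close> by (simp add: pairwise_insert disjnt_def)
  then have "matching (complement V E) ?N"
    using assms(5) yw unfolding matching_def by blast
  moreover have "\<Union>?N \<subseteq> \<Union>{{x, y}} \<union> unmatched"
    using assms(1,2) by auto
  ultimately have "card ?N \<le> card {{x, y}}"
    using no_augmenting_exchange[of "{{x, y}}" ?N] assms(4) by simp
  moreover have "card ?N = 2"
    using \<open>u \<noteq> y\<close> \<open>u \<noteq> w\<close> by (simp add: doubleton_eq_iff)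
  ultimately show False by simp
qed

lemma no_augmenting_path_5:
  assumes "u \<in> unmatched" "w \<in> unmatched" "u \<noteq> w"
    and "{x1, y1} \<in> M" "{x2, y2} \<in> M" "{x1, y1} \<noteq> {x2, y2}"
    and "complement V E u x1" "complement V E y1 y2"
  shows "\<not> complement V E x2 w"
proof
  assume x2w: "complement V E x2 w"
  have "x1 \<noteq> y1" "x2 \<noteq> y2"
    using matching_edge_neq[OF matching complement_irrefl] assms(4,5) by blast+
  moreover have "{x1, y1} \<inter> {x2, y2} = {}"
    using matching_edges_eq[OF matching complement_irrefl] assms(4-6) by blast
  moreover have "u \<notin> {x1, y1, x2, y2}" "w \<notin> {x1, y1, x2, y2}"
    using assms(1,2,4,5) by auto
  ultimately have distinct: "distinct [u, w, x1, y1, x2, y2]"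
    using assms(3) by auto
  let ?N = "{{u, x1}, {y1, y2}, {x2, w}}"
  have "pairwise disjnt ?N"
    using distinct by (auto simp: pairwise_insert disjnt_def)
  then have "matching (complement V E) ?N"
    using assms(7,8) x2w unfolding matching_def by blast
  moreover have "\<Union>?N \<subseteq> \<Union>{{x1, y1}, {x2, y2}} \<union> unmatched"
    using assms(1,2) by auto
  ultimately have "card ?N \<le> card {{x1, y1}, {x2, y2}}"
    using no_augmenting_exchange[of "{{x1, y1}, {x2, y2}}" ?N] assms(4,5) by simp
  also have "\<dots> \<le> 2"
    by (simp add: card_insert_le_m1)
  finally have "card ?N \<le> 2" .
  moreover have "card ?N = 3"
    using distinct by (auto simp: card_insert_if doubleton_eq_iff)
  ultimately show False by simp
qed

lemma adjacent_unmatched_partner: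
  assumes "u \<in> unmatched" "w \<in> unmatched" "complement V E w x"
  shows "E u (partner M x)"
proof (rule ccontr)
  assume not_adj: "\<not> E u (partner M x)"
  let ?p = "partner M x"
  have "x \<in> \<Union>M"
    using matched_if_non_neighbour_unmatched assms(2,3) .
  then have edge: "{x, ?p} \<in> M"
    using partner_in_matching[OF matching complement_irrefl] by blast
  then have "?p \<in> \<Union>M" "complement V E x ?p"
    using complement_if_matching_edge by auto
  then have "complement V E ?p u"
    using not_adj assms(1) matched_subset sym by (auto simp: complement_def)
  show False
  proof (cases "u = w")
    case True
    then have "E x ?p"
      using adjacent_if_common_non_neighbour assms(3) \<open>complement V E ?p u\<close> complement_sym
        \<open>complement V E x ?p\<close> complement_irrefl by metis
    with \<open>complement V E x ?p\<close> show False
      by (simp add: complement_def)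
  next
    case False
    then show False
      using no_augmenting_path_3[OF assms(2,1) _ edge assms(3)] \<open>complement V E ?p u\<close> by blast
  qed
qed

lemma adjacent_partners:
  assumes "u \<in> unmatched" "w \<in> unmatched" "u \<noteq> w" "complement V E u x"
    and "complement V E w x" "complement V E w y" "x \<noteq> y"
  shows "E (partner M x) (partner M y)"
proof (rule ccontr)
  assume not_adj: "\<not> E (partner M x) (partner M y)"
  have "x \<in> \<Union>M" "y \<in> \<Union>M"
    using matched_if_non_neighbour_unmatched assms(2,5,6) by blast+
  then have edges: "{x, partner M x} \<in> M" "{y, partner M y} \<in> M"
    using partner_in_matching[OF matching complement_irrefl] by blast+
  have "partner M x \<noteq> partner M y"
    using inj_on_partner[OF matching complement_irrefl] \<open>x \<in> \<Union>M\<close> \<open>y \<in> \<Union>M\<close> assms(7)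
    by (auto dest: inj_onD)
  then have "complement V E (partner M x) (partner M y)"
    using not_adj edges matching_subset_Pow_V by (auto simp: complement_def)
  moreover have "{x, partner M x} \<noteq> {y, partner M y}"
  proof
    assume "{x, partner M x} = {y, partner M y}"
    then have "x = partner M y"
      using assms(7) by (auto simp: doubleton_eq_iff)
    then have "complement V E y x"
      using complement_if_matching_edge edges(2) by simp
    moreover have "E y x"
      using adjacent_if_common_non_neighbour assms(5-7) by auto
    ultimately show False
      by (simp add: complement_def)
  qed
  ultimately have "\<not> complement V E y w"
    using no_augmenting_path_5[OF assms(1-3) edges] assms(4) by blast
  then show False
    using assms(6) complement_sym by blast
qed

definition shared_non_neighbours :: "'a \<Rightarrow> 'a set" where
  "shared_non_neighbours w = {x. complement V E w x \<and> (\<exists>u \<in> unmatched - {w}. complement V E u x)}"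

lemma is_clique_unmatched_Un_unshared:
  assumes "w \<in> unmatched"
  shows "is_clique V E ((unmatched - {w}) \<union> ({y. complement V E w y} - shared_non_neighbours w))"
proof (rule is_clique_Un)
  show "is_clique V E (unmatched - {w})"
    using is_clique_unmatched by (rule is_clique_subset) blast
  show "is_clique V E ({y. complement V E w y} - shared_non_neighbours w)"
    using is_clique_non_neighbours by (rule is_clique_subset) blast
  fix u x assume "u \<in> unmatched - {w}" "x \<in> {y. complement V E w y} - shared_non_neighbours w" "u \<noteq> x"
  then show "E u x"
    by (auto simp: shared_non_neighbours_def complement_def)
qed

lemma is_clique_unmatched_Un_partners:
  assumes w: "w \<in> unmatched"
  shows "is_clique V E (unmatched \<union> partner M ` shared_non_neighbours w)"
proof (rule is_clique_Un)
  show "is_clique V E unmatched"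
    by (rule is_clique_unmatched)
  have "E (partner M x) (partner M y)"
    if "x \<in> shared_non_neighbours w" "y \<in> shared_non_neighbours w" "x \<noteq> y" for x y
    using that adjacent_partners[OF _ w] unfolding shared_non_neighbours_def by blast
  then have "\<forall>a \<in> partner M ` shared_non_neighbours w. \<forall>b \<in> partner M ` shared_non_neighbours w.
      a \<noteq> b \<longrightarrow> E a b"
    by blast
  moreover have "partner M ` shared_non_neighbours w \<subseteq> V"
    using partner_in_matching[OF matching complement_irrefl] matched_if_non_neighbour_unmatched[OF w]
      matched_subset unfolding shared_non_neighbours_def by blast
  ultimately show "is_clique V E (partner M ` shared_non_neighbours w)"
    by (simp add: is_clique_def)
  fix u p assume "u \<in> unmatched" "p \<in> partner M ` shared_non_neighbours w"
  then show "E u p"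
    using adjacent_unmatched_partner[OF _ w] by (auto simp: shared_non_neighbours_def)
qed

lemma clique_number_bound_unmatched:
  assumes w: "w \<in> unmatched"
  shows "2 * card unmatched + card {y. complement V E w y} \<le> 2 * clique_number V E + 1"
proof -
  define D where "D = {y. complement V E w y}"
  define T where "T = shared_non_neighbours w"
  have D_matched: "D \<subseteq> \<Union>M"
    using matched_if_non_neighbour_unmatched w by (auto simp: D_def)
  have "finite D" "T \<subseteq> D"
    using D_matched matched_subset finite_V by (auto simp: T_def D_def shared_non_neighbours_def intro: finite_subset)
  then have "finite T"
    by (rule finite_subset[rotated])
  have "finite unmatched"
    using finite_V by simp
  have "card ((unmatched - {w}) \<union> (D - T)) = card unmatched - 1 + (card D - card T)"
    using D_matched w \<open>finite D\<close> \<open>finite T\<close> \<open>finite unmatched\<close> \<open>T \<subseteq> D\<close>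
    by (subst card_Un_disjoint) (auto simp: card_Diff_subset)
  then have clique1: "card unmatched - 1 + (card D - card T) \<le> clique_number V E"
    using card_le_clique_number[OF finite_V is_clique_unmatched_Un_unshared[OF w]]
    unfolding D_def T_def by simp
  have "inj_on (partner M) T"
    using inj_on_partner[OF matching complement_irrefl] D_matched \<open>T \<subseteq> D\<close> inj_on_subset by blast
  moreover have "partner M ` T \<subseteq> \<Union>M"
    using partner_in_matching[OF matching complement_irrefl] D_matched \<open>T \<subseteq> D\<close> by blast
  ultimately have "card (unmatched \<union> partner M ` T) = card unmatched + card T"
    using \<open>finite unmatched\<close> \<open>finite T\<close> by (subst card_Un_disjoint) (auto simp: card_image)
  then have clique2: "card unmatched + card T \<le> clique_number V E"
    using card_le_clique_number[OF finite_V is_clique_unmatched_Un_partners[OF w]]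
    unfolding T_def by simp
  have "card T \<le> card D"
    using \<open>finite D\<close> \<open>T \<subseteq> D\<close> by (rule card_mono)
  moreover have "card unmatched \<ge> 1"
    using w \<open>finite unmatched\<close> by (metis One_nat_def Suc_leI card_gt_0_iff empty_iff)
  ultimately show ?thesis
    using clique1 clique2 unfolding D_def by linarith
qed

lemma chromatic_number_le_matching_unmatched:
  "chromatic_number V E \<le> card M + card unmatched"
proof -
  have "chromatic_number (\<Union>M) E \<le> card M"
  proof (rule chromatic_number_Union_independent_le[OF finite_matching])
    fix e assume "e \<in> M"
    then obtain x y where "e = {x, y}" "complement V E x y"
      using matching by (auto simp: matching_def)
    then show "finite e \<and> is_independent (\<Union>M) E e"
      using \<open>e \<in> M\<close> sym irrefl by (auto simp: is_independent_def complement_def)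
  qed
  moreover have "chromatic_number unmatched E \<le> card unmatched"
    using finite_V by (simp add: chromatic_number_le_card)
  moreover have "V = \<Union>M \<union> unmatched"
    using matched_subset by blast
  ultimately show ?thesis
    using chromatic_number_Un_le[of "\<Union>M" unmatched] finite_V matched_subset
    by (metis add_mono finite_Diff finite_subset le_trans)
qed

lemma card_eq_matching_unmatched: "card V = 2 * card M + card unmatched"
  using card_matched matched_subset finite_V
  by (metis card_Diff_subset card_mono finite_subset le_add_diff_inverse)

lemma four_chromatic_number_le_if_alpha_le_2:
  "4 * chromatic_number V E \<le> 2 * clique_number V E + max_degree V E + card V + 2"
proof (cases "unmatched = {}")
  case True
  show ?thesis
  proof (cases "V = {}")
    case True
    then show ?thesis by (simp add: chromatic_number_empty)
  next
    case False
    then obtain v where "v \<in> V"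
      by blast
    then have "card V \<le> Suc (card {y. complement V E v y} + max_degree V E)"
      using finite_V by (intro card_le_Suc_non_neighbours_max_degree)
    moreover have "card {y. complement V E v y} \<le> clique_number V E"
      using card_le_clique_number[OF finite_V is_clique_non_neighbours] .
    moreover have "card unmatched = 0"
      using \<open>unmatched = {}\<close> card.empty by metis
    ultimately show ?thesis
      using chromatic_number_le_matching_unmatched card_eq_matching_unmatched by linarith
  qed
next
  case False
  then obtain w where "w \<in> unmatched"
    by blast
  then have "card V \<le> Suc (card {y. complement V E w y} + max_degree V E)"
    using finite_V by (intro card_le_Suc_non_neighbours_max_degree) auto
  then show ?thesis
    using clique_number_bound_unmatched[OF \<open>w \<in> unmatched\<close>]
      chromatic_number_le_matching_unmatched card_eq_matching_unmatched by linarith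
qed

end

lemma two_pow_le_exp: "(2::real) ^ n \<le> exp (real n)"
proof -
  have "(2::real) ^ n \<le> exp 1 ^ n"
    using exp_ge_add_one_self[of 1] by (intro power_mono) auto
  then show ?thesis
    by (simp add: exp_of_nat_mult[symmetric])
qed

lemma ln_less_if_exponential_bound:
  fixes \<epsilon> :: real and k n w :: nat
  assumes "\<epsilon> > 0" "\<epsilon> * w < k" "n < 21 * k + 1280 * 2 ^ w"
  shows "ln n < (1 / \<epsilon> + 2048) * k"
proof -
  have "0 \<le> \<epsilon> * w"
    using assms(1) by simp
  then have "k \<ge> 1"
    using assms(2) by simp
  have "real w < k / \<epsilon>"
    using assms(1,2) by (simp add: pos_less_divide_eq mult.commute)
  then have "(2::real) ^ w \<le> exp (k / \<epsilon>)"
    using two_pow_le_exp[of w] by (meson exp_le_cancel_iff less_imp_le order_trans)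
  moreover have "21 * real k \<le> 21 * real k * exp (k / \<epsilon>)"
    using assms(1) by (simp add: mult_le_cancel_left1)
  moreover have "real n < real (21 * k + 1280 * 2 ^ w)"
    using assms(3) by (simp only: of_nat_less_iff)
  ultimately have "real n < (21 * k + 1280) * exp (k / \<epsilon>)"
    by (simp add: distrib_right)
  also have "\<dots> \<le> exp (2048 * real k) * exp (k / \<epsilon>)"
  proof -
    have "21 * real k + 1280 \<le> 1 + 2048 * real k"
      using \<open>k \<ge> 1\<close> by simp
    also have "\<dots> \<le> exp (2048 * real k)"
      by (rule exp_ge_add_one_self)
    finally show ?thesis
      by (intro mult_right_mono) auto
  qed
  also have "\<dots> = exp ((1 / \<epsilon> + 2048) * k)"
    by (simp add: exp_add[symmetric] algebra_simps)
  finally have "real n < exp ((1 / \<epsilon> + 2048) * k)" .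
  moreover have "0 < (1 / \<epsilon> + 2048) * k"
    using assms(1) \<open>k \<ge> 1\<close> by (intro mult_pos_pos add_pos_pos) auto
  ultimately show ?thesis
    by (cases "n = 0") (auto simp: ln_less_cancel_iff[symmetric])
qed

lemma ln_less_if_colouring_bounds:
  fixes \<epsilon> :: real and c k w d n :: nat
  assumes "\<epsilon> > 0"
    and "4 * c \<le> 4 * k + 2 * w + 2 * d + 4"
    and "5 * c \<le> 5 * k + 2 * d + 5 * 2 ^ (w + 6)"
    and "n \<le> k + 2 * d"
    and "(1/2 + \<epsilon>) * w + (real d + 2) / 2 < c"
  shows "ln n < (1 / \<epsilon> + 2048) * k"
proof -
  have "(1/2 + \<epsilon>) * w = w / 2 + \<epsilon> * w"
    by (simp add: algebra_simps)
  then have c_large: "w / 2 + \<epsilon> * w + d / 2 + 1 < c"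
    using assms(5) by (simp add: add_divide_distrib)
  have "4 * real c \<le> 4 * real k + 2 * real w + 2 * real d + 4"
    using assms(2) by linarith
  then have "\<epsilon> * w < k"
    using c_large by linarith
  moreover have "real (5 * c) \<le> real (5 * k + 2 * d + 320 * 2 ^ w)"
    using assms(3) by (simp only: of_nat_le_iff power_add) simp
  moreover have "0 \<le> \<epsilon> * w" "0 \<le> real w" "real n \<le> real k + 2 * real d"
    using assms(1,4) by simp_all
  ultimately have "real n < real (21 * k + 1280 * 2 ^ w)"
    using c_large by simp
  then show ?thesis
    using ln_less_if_exponential_bound[OF assms(1) \<open>\<epsilon> * w < k\<close>] by (simp only: of_nat_less_iff)
qed

context simple_adjacency
begin

lemma four_chromatic_number_le_Diff_maximum_independent:
  assumes "finite V" "is_independent V E I" "card I = independence_number V E" "card I \<ge> 3"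
    and IH: "4 * chromatic_number (V - I) E
      \<le> 2 * clique_number (V - I) E + max_degree (V - I) E + card (V - I) + 2"
  shows "4 * chromatic_number V E \<le> 2 * clique_number V E + max_degree V E + card V + 2"
proof -
  have "I \<subseteq> V" "finite I"
    using assms(1,2) by (auto simp: is_independent_def intro: finite_subset)
  have "chromatic_number V E \<le> chromatic_number (V - I) E + chromatic_number I E"
    using chromatic_number_Un_le[of "V - I" I] assms(1) \<open>finite I\<close> \<open>I \<subseteq> V\<close>
    by (simp add: Un_absorb2)
  then have chi: "chromatic_number V E \<le> chromatic_number (V - I) E + 1"
    using chromatic_number_independent_le_1[OF assms(2)] by linarith
  have card_diff: "card (V - I) + card I = card V"
    using \<open>I \<subseteq> V\<close> \<open>finite I\<close> assms(1) by (metis card_Diff_subset card_mono le_add_diff_inverse2)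
  show ?thesis
  proof (cases "V - I = {}")
    case True
    then have "chromatic_number (V - I) E = 0"
      using chromatic_number_empty by metis
    then show ?thesis
      using chi card_diff assms(4) by linarith
  next
    case False
    have "max_degree (V - I) E < max_degree V E"
    proof (rule max_degree_Diff_less[OF assms(1) \<open>I \<subseteq> V\<close> False])
      show "\<exists>z\<in>I. E y z" if "y \<in> V - I" for y
        using maximum_independent_set_dominating[OF assms(1-3) that] .
    qed
    moreover have "clique_number (V - I) E \<le> clique_number V E"
      using assms(1) by (rule clique_number_mono) blast
    ultimately show ?thesis
      using IH chi card_diff assms(4) by linarith
  qed
qed

lemma four_chromatic_number_le:
  assumes "finite V"
  shows "4 * chromatic_number V E \<le> 2 * clique_number V E + max_degree V E + card V + 2"
  using assms
proof (induction "card V" arbitrary: V rule: less_induct)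
  case less
  show ?case
  proof (cases "independence_number V E \<le> 2")
    case True
    obtain M where "maximum_matching (complement V E) M"
      using maximum_matching_exists less.prems complement_vertices by metis
    then interpret alpha_two_graph E V M
      using less.prems True by unfold_locales
    show ?thesis
      by (rule four_chromatic_number_le_if_alpha_le_2)
  next
    case False
    obtain I where I: "is_independent V E I" "card I = independence_number V E"
      using independence_number_attained less.prems by blast
    have "I \<subseteq> V" "I \<noteq> {}"
      using I False by (auto simp: is_independent_def)
    then have "V - I \<subset> V"
      by blast
    then have "card (V - I) < card V"
      by (rule psubset_card_mono[OF less.prems])
    then have "4 * chromatic_number (V - I) E
        \<le> 2 * clique_number (V - I) E + max_degree (V - I) E + card (V - I) + 2"
      using less.hyps less.prems by blast
    moreover have "card I \<ge> 3"
      using False I(2) by linarith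
    ultimately show ?thesis
      using four_chromatic_number_le_Diff_maximum_independent[OF less.prems I] by blast
  qed
qed

lemma four_chromatic_number_join_le:
  assumes "finite A" "finite B" "A \<inter> B = {}" "A \<noteq> {}" "B \<noteq> {}"
    and "\<And>a b. a \<in> A \<Longrightarrow> b \<in> B \<Longrightarrow> E a b"
  shows "4 * chromatic_number (A \<union> B) E \<le> 2 * clique_number (A \<union> B) E + 2 * max_degree (A \<union> B) E + 4"
proof -
  have "max_degree A E + card B \<le> max_degree (A \<union> B) E"
    using max_degree_join assms by blast
  moreover have "max_degree B E + card A \<le> max_degree (A \<union> B) E"
    using max_degree_join_sym assms by blast
  moreover have "clique_number A E + clique_number B E \<le> clique_number (A \<union> B) E"
    using clique_number_join assms by blast
  ultimately show ?thesis
    using chromatic_number_Un_le[OF assms(1,2)] four_chromatic_number_le[OF assms(1)]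
      four_chromatic_number_le[OF assms(2)] by linarith
qed

lemma chromatic_number_bounds_separator:
  assumes "finite V" "K \<subseteq> V" "V - K = A \<union> B" "A \<inter> B = {}" "A \<noteq> {}" "B \<noteq> {}"
    and join: "\<And>a b. a \<in> A \<Longrightarrow> b \<in> B \<Longrightarrow> E a b"
  shows "4 * chromatic_number V E \<le> 4 * card K + 2 * clique_number V E + 2 * max_degree V E + 4"
    and "5 * chromatic_number V E \<le> 5 * card K + 2 * max_degree V E + 5 * 2 ^ (clique_number V E + 6)"
    and "card V \<le> card K + 2 * max_degree V E"
proof -
  have fin: "finite A" "finite B" "finite K"
    using assms(1-3) by (auto intro: finite_subset)
  have V: "V = K \<union> (A \<union> B)" "K \<inter> (A \<union> B) = {}"
    using assms(2,3) by auto
  have "chromatic_number V E \<le> chromatic_number K E + chromatic_number (A \<union> B) E"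
    using chromatic_number_Un_le[of K "A \<union> B"] fin V(1) by simp
  then have chi: "chromatic_number V E \<le> card K + chromatic_number (A \<union> B) E"
    using chromatic_number_le_card[OF fin(3)] by linarith
  have mono: "clique_number (A \<union> B) E \<le> clique_number V E" "max_degree (A \<union> B) E \<le> max_degree V E"
    using assms(1,3,5) by (auto intro: clique_number_mono max_degree_mono)
  have card_AB: "card (A \<union> B) \<le> 2 * max_degree V E"
    using card_join_le_max_degree[OF fin(1,2) assms(4-6) join] mono(2) by linarith
  show "4 * chromatic_number V E \<le> 4 * card K + 2 * clique_number V E + 2 * max_degree V E + 4"
    using four_chromatic_number_join_le[OF fin(1,2) assms(4-6) join] chi mono by linarith
  show "5 * chromatic_number V E \<le> 5 * card K + 2 * max_degree V E + 5 * 2 ^ (clique_number V E + 6)"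
    using chromatic_number_le_ramsey[OF _ mono(1)] fin chi card_AB by fastforce
  show "card V \<le> card K + 2 * max_degree V E"
    using V fin card_AB by (simp add: card_Un_disjoint)
qed

lemma ln_card_le_vertex_connectivity:
  assumes "finite V" "V \<noteq> {}" "\<epsilon> > 0"
    and large: "(1/2 + \<epsilon>) * real (clique_number V E) + (real (max_degree V E) + 2) / 2
      < real (chromatic_number V E)"
  shows "ln (card V) \<le> (1 / \<epsilon> + 2048) * vertex_connectivity V (complement V E)"
proof (cases "is_complete V (complement V E)")
  case True
  have "card V \<ge> 1"
    using assms(1,2) by (simp add: Suc_le_eq card_gt_0_iff)
  then have "ln (card V) \<le> real (card V - 1)"
    using ln_le_minus_one[of "card V"] by (simp add: of_nat_diff)
  also have "\<dots> \<le> (1 / \<epsilon> + 2048) * (card V - 1)"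
    using assms(3) by (simp add: mult_le_cancel_right1)
  finally show ?thesis
    using True by (simp add: vertex_connectivity_def)
next
  case False
  then obtain K A B where K: "K \<subseteq> V" "card K = vertex_connectivity V (complement V E)"
    and AB: "V - K = A \<union> B" "A \<inter> B = {}" "A \<noteq> {}" "B \<noteq> {}" "\<And>a b. a \<in> A \<Longrightarrow> b \<in> B \<Longrightarrow> E a b"
    using complement_separator assms(1) by metis
  have "ln (card V) < (1 / \<epsilon> + 2048) * card K"
    using ln_less_if_colouring_bounds[OF assms(3) chromatic_number_bounds_separator[OF assms(1) K(1) AB] large] .
  then show ?thesis
    using K(2) by simp
qed

end

theorem proposition14:
  fixes \<epsilon> :: real
  assumes "\<epsilon> > 0"
  shows "\<exists>C::real. C > 0 \<and>
    (\<forall>(V::nat set) E. simple_graph V E \<longrightarrow>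
       real (chromatic_number V E) \<le> (1/2 + \<epsilon>) * real (clique_number V E) + (real (max_degree V E) + 2) / 2
       \<or> real (vertex_connectivity V (complement V E)) \<ge> C * ln (real (card V)))"
proof -
  define D where "D = 1 / \<epsilon> + 2048"
  have "D > 0"
    using assms unfolding D_def by (simp add: add_pos_pos)
  have "real (chromatic_number V E) \<le> (1/2 + \<epsilon>) * real (clique_number V E) + (real (max_degree V E) + 2) / 2
       \<or> real (vertex_connectivity V (complement V E)) \<ge> 1 / D * ln (real (card V))"
    if G: "simple_graph V E" for V :: "nat set" and E
  proof -
    interpret simple_adjacency E
      using G by unfold_locales (auto simp: simple_graph_def)
    have "finite V" "V \<noteq> {}"
      using G by (auto simp: simple_graph_def)
    then show ?thesis
      using ln_card_le_vertex_connectivity[OF _ _ assms] \<open>D > 0\<close>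
      unfolding D_def by (force simp: field_simps)
  qed
  then show ?thesis
    using \<open>D > 0\<close> by (intro exI[of _ "1 / D"]) auto
qed
end
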